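(* In the setting below, let $\mu_P$ be the induced measure on $P$, $\mu_P(E)=\int_{P^{(0)}}\lambda_P^v(E)\,d\mu_P^{(0)}(v)$. Then for every Borel function $f$ on $P$, $$\int_P f\,d\mu_P=\int_{G^{(0)}}\int_G\int_{S^{(0)}}\int_S\int_{T^{(0)}}\int_T f(\sigma,y,\tau)\,d\lambda_T^t(\tau)\,d\gamma_q^{d_G(y)}(t)\,d\lambda_S^s(\sigma)\,d\gamma_p^{r_G(y)}(s)\,d\lambda_G^u(y)\,d\mu_G^{(0)}(u).$$
   Context: Setting: $(S,\lambda_S^\bullet,\mu_S^{(0)})$, $(G,\lambda_G^\bullet,\mu_G^{(0)})$, $(T,\lambda_T^\bullet,\mu_T^{(0)})$ are Haar groupoids, i.e. second countable, locally compact, Hausdorff topological groupoids with continuous left Haar systems (families $\lambda^u$ of measures concentrated on $r^{-1}(u)$, continuous in $u$ against continuous compactly supported $f\ge0$, left invariant $\lambda^{d(x)}(E)=\lambda^{r(x)}(x(E\cap r^{-1}(d(x))))$, positive on open sets meeting $r^{-1}(u)$) and non-zero quasi-invariant Radon measures $\mu^{(0)}$ on unit spaces (the induced measure $\mu(E)=\int\lambda^u(E)d\mu^{(0)}(u)$ is equivalent to $E\mapsto\mu(E^{-1})$). $p:S\to G$, $q:T\to G$ are homomorphisms of Haar groupoids (continuous homomorphisms preserving the class of induced measures); $\mu_G$ is the induced measure of $G$. The weak pullback is $P=\{(s,g,t)\in S\times G\times T: r_G(g)=r_G(p(s)),\ d_G(g)=r_G(q(t))\}$, with $r_P(s,g,t)=(r_S(s),g,r_T(t))$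 and unit space $P^{(0)}=\{(s,g,t):s\in S^{(0)},t\in T^{(0)},r_G(g)=p(s),d_G(g)=q(t)\}$; $\lambda_P^{(s,g,t)}=\lambda_S^s\times\delta_g\times\lambda_T^t$ for $(s,g,t)\in P^{(0)}$. A Borel system of measures (BSM) on a Borel map $\pi:X\to Y$ is a family $\{\gamma^y\}$ of positive Borel measures on $X$, $\gamma^y$ concentrated on $\pi^{-1}(y)$, with $y\mapsto\gamma^y(E)$ Borel; a disintegration of $\mu$ w.r.t. $\nu$ if $\mu(E)=\int\gamma^y(E)d\nu(y)$. $\gamma_p^\bullet$ (resp. $\gamma_q^\bullet$) is a locally finite and locally bounded BSM on $p|_{S^{(0)}}:S^{(0)}\to G^{(0)}$ (resp. $q|_{T^{(0)}}$) disintegrating $\mu_S^{(0)}$ (resp. $\mu_T^{(0)}$) w.r.t. $\mu_G^{(0)}$. For $x\in G$, $\eta^x=\gamma_p^{r_G(x)}\times\delta_x\times\gamma_q^{d_G(x)}$ on $P^{(0)}$, and $\mu_P^{(0)}(B)=\int_G\eta^x(B)\,d\mu_G(x)$. *)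

theory Defs
  imports "HOL-Probability.Probability"
begin

text \<open>A groupoid whose set of arrows is the whole type 'a, together with a
  left Haar system (indexed by units) and a measure on the unit space.\<close>

record 'a hgpd =
  rg   :: "'a \<Rightarrow> 'a"
  dm   :: "'a \<Rightarrow> 'a"
  mul  :: "'a \<Rightarrow> 'a \<Rightarrow> 'a"
  iv   :: "'a \<Rightarrow> 'a"
  haar :: "'a \<Rightarrow> 'a measure"
  mu0  :: "'a measure"

definition units :: "('a, 'b) hgpd_scheme \<Rightarrow> 'a set" where
  "units G = range (rg G)"

definition groupoid :: "('a, 'b) hgpd_scheme \<Rightarrow> bool" where
  "groupoid G \<longleftrightarrow>
     (\<forall>x. rg G (rg G x) = rg G x \<and> dm G (rg G x) = rg G x \<and>
          rg G (dm G x) = dm G x \<and> dm G (dm G x) = dm G x) \<and>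
     (\<forall>x y. dm G x = rg G y \<longrightarrow> rg G (mul G x y) = rg G x \<and> dm G (mul G x y) = dm G y) \<and>
     (\<forall>x y z. dm G x = rg G y \<longrightarrow> dm G y = rg G z \<longrightarrow>
          mul G (mul G x y) z = mul G x (mul G y z)) \<and>
     (\<forall>x. mul G (rg G x) x = x \<and> mul G x (dm G x) = x) \<and>
     (\<forall>x. rg G (iv G x) = dm G x \<and> dm G (iv G x) = rg G x \<and>
          mul G x (iv G x) = rg G x \<and> mul G (iv G x) x = dm G x)"

text \<open>Second countable, locally compact, Hausdorff topological groupoid
  (second countability and Hausdorffness come from the type class).\<close>
definition top_groupoid :: "('a::topological_space, 'b) hgpd_scheme \<Rightarrow> bool" where
  "top_groupoid G \<longleftrightarrow> groupoid G \<and> locally compact (UNIV :: 'a set) \<and>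
     continuous_on {(x, y). dm G x = rg G y} (\<lambda>(x, y). mul G x y) \<and>
     continuous_on UNIV (iv G)"

definition haar_system :: "('a::topological_space, 'b) hgpd_scheme \<Rightarrow> bool" where
  "haar_system G \<longleftrightarrow>
     (\<forall>u\<in>units G. sets (haar G u) = sets borel) \<and>
     (\<forall>u\<in>units G. emeasure (haar G u) (- (rg G -` {u})) = 0) \<and>
     (\<forall>f::'a \<Rightarrow> real. continuous_on UNIV f \<longrightarrow> (\<forall>x. 0 \<le> f x) \<longrightarrow>
        compact (closure {x. f x \<noteq> 0}) \<longrightarrow>
        (\<forall>u\<in>units G. (\<integral>\<^sup>+ x. ennreal (f x) \<partial>haar G u) < \<infinity>) \<and>
        continuous_on (units G) (\<lambda>u. enn2real (\<integral>\<^sup>+ x. ennreal (f x) \<partial>haar G u))) \<and>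
     (\<forall>x. \<forall>E\<in>sets borel.
        emeasure (haar G (dm G x)) E =
        emeasure (haar G (rg G x)) (mul G x ` (E \<inter> rg G -` {dm G x}))) \<and>
     (\<forall>u\<in>units G. \<forall>V. open V \<longrightarrow> V \<inter> rg G -` {u} \<noteq> {} \<longrightarrow>
        0 < emeasure (haar G u) V)"

definition induced :: "('a::topological_space, 'b) hgpd_scheme \<Rightarrow> 'a measure" where
  "induced G = measure_of UNIV (sets borel)
      (\<lambda>E. \<integral>\<^sup>+ u. emeasure (haar G u) E \<partial>mu0 G)"

text \<open>Non-zero quasi-invariant Radon measure on the unit space
  (modelled as a Borel measure on 'a concentrated on the units).\<close>
definition quasi_inv_radon :: "('a::topological_space, 'b) hgpd_scheme \<Rightarrow> bool" where
  "quasi_inv_radon G \<longleftrightarrow>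
     sets (mu0 G) = sets borel \<and>
     emeasure (mu0 G) (- units G) = 0 \<and>
     emeasure (mu0 G) UNIV \<noteq> 0 \<and>
     (\<forall>K. compact K \<longrightarrow> emeasure (mu0 G) K < \<infinity>) \<and>
     (\<forall>E\<in>sets borel. emeasure (induced G) E = 0 \<longleftrightarrow>
                      emeasure (induced G) (iv G ` E) = 0)"

definition haar_groupoid :: "('a::topological_space, 'b) hgpd_scheme \<Rightarrow> bool" where
  "haar_groupoid G \<longleftrightarrow> top_groupoid G \<and> haar_system G \<and> quasi_inv_radon G"

definition haar_hom ::
  "('a::topological_space, 'b) hgpd_scheme \<Rightarrow> ('c::topological_space, 'd) hgpd_scheme
     \<Rightarrow> ('a \<Rightarrow> 'c) \<Rightarrow> bool" where
  "haar_hom S G p \<longleftrightarrow> continuous_on UNIV p \<and>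
     (\<forall>x y. dm S x = rg S y \<longrightarrow>
        dm G (p x) = rg G (p y) \<and> p (mul S x y) = mul G (p x) (p y)) \<and>
     (\<forall>E\<in>sets borel. emeasure (induced G) E = 0 \<longleftrightarrow>
                      emeasure (induced S) (p -` E) = 0)"

definition bsm :: "'x::topological_space set \<Rightarrow> 'y::topological_space set \<Rightarrow>
    ('x \<Rightarrow> 'y) \<Rightarrow> ('y \<Rightarrow> 'x measure) \<Rightarrow> bool" where
  "bsm X Y \<pi> \<gamma> \<longleftrightarrow>
     (\<forall>y\<in>Y. sets (\<gamma> y) = sets borel \<and>
            emeasure (\<gamma> y) (- (X \<inter> \<pi> -` {y})) = 0) \<and>
     (\<forall>E\<in>sets borel. (\<lambda>y. emeasure (\<gamma> y) E) \<in> borel_measurable (restrict_space borel Y))"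

definition loc_finite_bsm :: "'x::topological_space set \<Rightarrow> 'y::topological_space set \<Rightarrow>
    ('y \<Rightarrow> 'x measure) \<Rightarrow> bool" where
  "loc_finite_bsm X Y \<gamma> \<longleftrightarrow>
     (\<forall>y\<in>Y. \<forall>K. compact K \<longrightarrow> K \<subseteq> X \<longrightarrow> emeasure (\<gamma> y) K < \<infinity>)"

definition loc_bounded_bsm :: "'x::topological_space set \<Rightarrow> 'y::topological_space set \<Rightarrow>
    ('y \<Rightarrow> 'x measure) \<Rightarrow> bool" where
  "loc_bounded_bsm X Y \<gamma> \<longleftrightarrow>
     (\<forall>K. compact K \<longrightarrow> K \<subseteq> X \<longrightarrow> (\<exists>c<\<infinity>. \<forall>y\<in>Y. emeasure (\<gamma> y) K \<le> c))"

definition disintegrates :: "('y \<Rightarrow> 'x::topological_space measure) \<Rightarrow> 'x measure \<Rightarrow> 'y measure \<Rightarrow> bool" where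
  "disintegrates \<gamma> \<mu> \<nu> \<longleftrightarrow>
     (\<forall>E\<in>sets borel. emeasure \<mu> E = (\<integral>\<^sup>+ y. emeasure (\<gamma> y) E \<partial>\<nu>))"

definition wp_units ::
  "('s, 'a) hgpd_scheme \<Rightarrow> ('g, 'b) hgpd_scheme \<Rightarrow> ('t, 'c) hgpd_scheme \<Rightarrow>
   ('s \<Rightarrow> 'g) \<Rightarrow> ('t \<Rightarrow> 'g) \<Rightarrow> ('s \<times> 'g \<times> 't) set" where
  "wp_units S G T p q = {(s, g, t). s \<in> units S \<and> t \<in> units T \<and>
       rg G g = p s \<and> dm G g = q t}"

definition wp_haar ::
  "('s::topological_space, 'a) hgpd_scheme \<Rightarrow> ('t::topological_space, 'c) hgpd_scheme \<Rightarrow>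
   's \<times> 'g::topological_space \<times> 't \<Rightarrow> ('s \<times> 'g \<times> 't) measure" where
  "wp_haar S T v = (case v of (s, g, t) \<Rightarrow>
      haar S s \<Otimes>\<^sub>M (return borel g \<Otimes>\<^sub>M haar T t))"

definition wp_eta ::
  "('g::topological_space, 'b) hgpd_scheme \<Rightarrow> ('g \<Rightarrow> 's::topological_space measure) \<Rightarrow>
   ('g \<Rightarrow> 't::topological_space measure) \<Rightarrow> 'g \<Rightarrow> ('s \<times> 'g \<times> 't) measure" where
  "wp_eta G \<gamma>p \<gamma>q x = \<gamma>p (rg G x) \<Otimes>\<^sub>M (return borel x \<Otimes>\<^sub>M \<gamma>q (dm G x))"

definition wp_mu0 ::
  "('g::topological_space, 'b) hgpd_scheme \<Rightarrow> ('g \<Rightarrow> 's::topological_space measure) \<Rightarrow>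
   ('g \<Rightarrow> 't::topological_space measure) \<Rightarrow> ('s \<times> 'g \<times> 't) measure" where
  "wp_mu0 G \<gamma>p \<gamma>q = measure_of UNIV (sets borel)
      (\<lambda>B. \<integral>\<^sup>+ x. emeasure (wp_eta G \<gamma>p \<gamma>q x) B \<partial>induced G)"

definition wp_induced ::
  "('s::topological_space, 'a) hgpd_scheme \<Rightarrow> ('g::topological_space, 'b) hgpd_scheme \<Rightarrow>
   ('t::topological_space, 'c) hgpd_scheme \<Rightarrow> ('s \<Rightarrow> 'g) \<Rightarrow> ('t \<Rightarrow> 'g) \<Rightarrow>
   ('g \<Rightarrow> 's measure) \<Rightarrow> ('g \<Rightarrow> 't measure) \<Rightarrow> ('s \<times> 'g \<times> 't) measure" where
  "wp_induced S G T p q \<gamma>p \<gamma>q = measure_of UNIV (sets borel)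
      (\<lambda>E. \<integral>\<^sup>+ v \<in> wp_units S G T p q. emeasure (wp_haar S T v) E \<partial>wp_mu0 G \<gamma>p \<gamma>q)"

end

theory Submission
  imports Defs
begin

text \<open>Every measure in sight is built from the Haar systems and from \<open>\<gamma>\<^sub>p, \<gamma>\<^sub>q\<close> by products with
  Dirac measures and by mixtures \<open>E \<mapsto> \<integral> \<lambda>\<^sup>u(E) d\<mu>(u)\<close>. Integrating against a mixture integrates the
  inner integrals, and integrating against \<open>\<lambda>\<^sub>S\<^sup>s \<times> \<delta>\<^sub>g \<times> \<lambda>\<^sub>T\<^sup>t\<close> is an iterated integral; so unfolding
  \<open>\<mu>\<^sub>P\<close>, \<open>\<mu>\<^sub>P\<^sup>(\<^sup>0\<^sup>)\<close> and \<open>\<mu>\<^sub>G\<close> yields the sixfold integral, up to one Tonelli swap of \<open>\<lambda>\<^sub>S\<^sup>s\<close> and \<open>\<gamma>\<^sub>q\<close>.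
  What makes the inner integrals measurable and Tonelli applicable is that all families involved
  are measurable kernels with a common exhaustion by sets of finite measure: for Haar systems this
  follows from the continuity axiom via Urysohn functions, for \<open>\<gamma>\<^sub>p, \<gamma>\<^sub>q\<close> from local finiteness.\<close>

lemma locally_compact_UNIV_nbhd:
  fixes W :: "'a::topological_space set"
  assumes "locally compact (UNIV :: 'a set)" and "open W" "x \<in> W"
  shows "\<exists>U K. open U \<and> compact K \<and> x \<in> U \<and> U \<subseteq> K \<and> K \<subseteq> W"
proof -
  have "openin (top_of_set UNIV) W" using assms by simp
  from assms(1)[unfolded locally_def, rule_format, OF conjI[OF this \<open>x \<in> W\<close>]]
  obtain U K where "openin (top_of_set UNIV) U" "compact K" "x \<in> U" "U \<subseteq> K" "K \<subseteq> W"
    by blast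
  then show ?thesis by auto
qed

lemma compact_subset_open_imp_compact_closure_nbhd:
  fixes W :: "'a::t2_space set"
  assumes LC: "locally compact (UNIV :: 'a set)" and K: "compact K" and W: "open W" "K \<subseteq> W"
  shows "\<exists>V. open V \<and> K \<subseteq> V \<and> compact (closure V) \<and> closure V \<subseteq> W"
proof -
  have "\<exists>U C. open U \<and> compact C \<and> x \<in> U \<and> U \<subseteq> C \<and> C \<subseteq> W" if "x \<in> K" for x
    using locally_compact_UNIV_nbhd[OF LC W(1)] W(2) that by blast
  then obtain FU FC where F: "\<And>x. x\<in>K \<Longrightarrow> open (FU x) \<and> compact (FC x) \<and> x \<in> FU x \<and> FU x \<subseteq> FC x \<and> FC x \<subseteq> W"
    by metis
  have "K \<subseteq> (\<Union>x\<in>K. FU x)" and "\<And>x. x\<in>K \<Longrightarrow> open (FU x)" using F by blast+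
  then obtain D where D: "D \<subseteq> K" "finite D" "K \<subseteq> (\<Union>x\<in>D. FU x)"
    using compactE_image[OF K] by blast
  define V where "V = (\<Union>x\<in>D. FU x)"
  define C where "C = (\<Union>x\<in>D. FC x)"
  have "compact C" unfolding C_def using D F by (intro compact_UN) auto
  have "V \<subseteq> C" unfolding V_def C_def using D F by blast
  then have cl: "closure V \<subseteq> C" using compact_imp_closed[OF \<open>compact C\<close>] closure_minimal by blast
  have "open V" unfolding V_def using D F by auto
  moreover have "compact (closure V)"
    using compact_Int_closed[OF \<open>compact C\<close>, of "closure V"] cl by (simp add: Int_absorb1)
  moreover have "C \<subseteq> W" unfolding C_def using D F by blast
  ultimately show ?thesis using cl D(3) unfolding V_def by blast
qed

lemma Hausdorff_space_euclidean_t2: "Hausdorff_space (euclidean :: 'a::t2_space topology)"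
  unfolding Hausdorff_space_def disjnt_def by (metis hausdorff open_openin)

lemma completely_regular_space_euclideanI:
  assumes "locally compact (UNIV :: 'a::t2_space set)"
  shows "completely_regular_space (euclidean :: 'a topology)"
proof -
  have "locally_compact_space (euclidean :: 'a topology)"
    unfolding locally_compact_space_def
    using locally_compact_UNIV_nbhd[OF assms, of UNIV] by auto
  then show ?thesis
    using locally_compact_regular_imp_completely_regular_space
      locally_compact_Hausdorff_imp_regular_space Hausdorff_space_euclidean_t2 by blast
qed

lemma Urysohn_compact_support:
  fixes W :: "'a::t2_space set"
  assumes LC: "locally compact (UNIV :: 'a set)" and K: "compact K" and W: "open W" "K \<subseteq> W"
  obtains \<phi> :: "'a \<Rightarrow> real" where "continuous_on UNIV \<phi>" "\<And>x. 0 \<le> \<phi> x \<and> \<phi> x \<le> 1"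
    "\<And>x. x \<in> K \<Longrightarrow> \<phi> x = 1" "\<And>x. x \<notin> W \<Longrightarrow> \<phi> x = 0" "compact (closure {x. \<phi> x \<noteq> 0})"
proof -
  obtain V where V: "open V" "K \<subseteq> V" "compact (closure V)" "closure V \<subseteq> W"
    using compact_subset_open_imp_compact_closure_nbhd[OF LC K W] by blast
  obtain f where f: "continuous_map euclidean (top_of_set {0..1::real}) f" "f ` (-V) \<subseteq> {0}" "f ` K \<subseteq> {1}"
    using Urysohn_completely_regular_compact_closed[of 0 1 euclidean K "-V"]
      completely_regular_space_euclideanI[OF LC] K V
    by (auto simp: disjnt_def closed_Compl)
  have supp: "{x. f x \<noteq> 0} \<subseteq> V" using f(2) by blast
  then have "compact (closure {x. f x \<noteq> 0})"
    using compact_Int_closed[OF V(3), of "closure {x. f x \<noteq> 0}"] closure_mono[OF supp]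
    by (simp add: Int_absorb1)
  moreover have "x \<notin> W \<Longrightarrow> f x = 0" for x using supp V(4) closure_subset by blast
  moreover have "continuous_on UNIV f" "\<And>x. 0 \<le> f x \<and> f x \<le> 1"
    using f(1) by (auto simp: continuous_map_in_subtopology)
  ultimately show ?thesis
    using that f(3) by blast
qed

lemma open_eq_Union_incseq_compact:
  fixes U :: "'a::{second_countable_topology,t2_space} set"
  assumes LC: "locally compact (UNIV :: 'a set)" and U: "open U"
  obtains K :: "nat \<Rightarrow> 'a set" where "incseq K" "\<And>n. compact (K n)" "(\<Union>n. K n) = U"
proof -
  obtain B :: "'a set set" where B: "countable B" "\<And>C. C \<in> B \<Longrightarrow> open C"
    "\<And>S. open S \<Longrightarrow> \<exists>U. U \<subseteq> B \<and> S = \<Union>U"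
    using univ_second_countable by blast
  define F where "F = {b\<in>B. compact (closure b) \<and> closure b \<subseteq> U}"
  have "countable F" unfolding F_def using B(1) by auto
  have UF: "U = (\<Union>b\<in>F. closure b)"
  proof
    show "(\<Union>b\<in>F. closure b) \<subseteq> U" unfolding F_def by blast
    show "U \<subseteq> (\<Union>b\<in>F. closure b)"
    proof
      fix x assume "x \<in> U"
      then obtain V where V: "open V" "x \<in> V" "compact (closure V)" "closure V \<subseteq> U"
        using compact_subset_open_imp_compact_closure_nbhd[OF LC, of "{x}" U] U by auto
      then obtain b where b: "b \<in> B" "x \<in> b" "b \<subseteq> V" using B(3)[OF V(1)] by blast
      have "closure b \<subseteq> closure V" using b(3) by (rule closure_mono)
      then have "compact (closure b)"
        using compact_Int_closed[OF V(3), of "closure b"] by (simp add: Int_absorb1)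
      with \<open>closure b \<subseteq> closure V\<close> V(4) b(1) have "b \<in> F" unfolding F_def by blast
      then show "x \<in> (\<Union>b\<in>F. closure b)" using b(2) closure_subset by blast
    qed
  qed
  show ?thesis
  proof (cases "F = {}")
    case True
    show ?thesis using that[of "\<lambda>n. {}"] True UF by (simp add: incseq_def)
  next
    case False
    define f where "f = from_nat_into F"
    have rf: "range f = F" unfolding f_def using range_from_nat_into[OF False \<open>countable F\<close>] .
    define K where "K n = (\<Union>i\<le>n. closure (f i))" for n
    show ?thesis
    proof (rule that)
      show "incseq K" unfolding K_def incseq_def by (intro allI impI UN_mono) auto
      show "compact (K n)" for n
      proof -
        have "f i \<in> F" for i using rf by blast
        then show ?thesis unfolding K_def F_def by (intro compact_UN) auto
      qed
      have "(\<Union>n. K n) = (\<Union>i. closure (f i))" unfolding K_def by auto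
      also have "\<dots> = (\<Union>b\<in>F. closure b)" using rf by auto
      finally show "(\<Union>n. K n) = U" using UF by simp
    qed
  qed
qed

lemma UNIV_eq_Union_incseq_relatively_compact_open:
  fixes type :: "'a::{second_countable_topology,t2_space} itself"
  assumes LC: "locally compact (UNIV :: 'a set)"
  obtains W :: "nat \<Rightarrow> 'a set" where "incseq W" "\<And>n. open (W n)" "\<And>n. compact (closure (W n))"
    "(\<Union>n. W n) = UNIV"
proof -
  obtain K :: "nat \<Rightarrow> 'a set" where K: "incseq K" "\<And>n. compact (K n)" "(\<Union>n. K n) = UNIV"
    by (rule open_eq_Union_incseq_compact[OF LC open_UNIV]) blast
  have "\<forall>n. \<exists>V. open V \<and> K n \<subseteq> V \<and> compact (closure V)"
    using compact_subset_open_imp_compact_closure_nbhd[OF LC K(2) open_UNIV] by blast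
  from choice[OF this] obtain V where V0: "\<forall>n. open (V n) \<and> K n \<subseteq> V n \<and> compact (closure (V n))"
    by blast
  then have V: "\<And>n. open (V n)" "\<And>n. K n \<subseteq> V n" "\<And>n. compact (closure (V n))"
    by auto
  define W where "W n = (\<Union>i\<le>n. V i)" for n
  have "incseq W" unfolding W_def incseq_def by (intro allI impI UN_mono) auto
  moreover have "open (W n)" for n unfolding W_def using V(1) by auto
  moreover have "compact (closure (W n))" for n
  proof -
    have c: "compact (\<Union>i\<le>n. closure (V i))" using V(3) by (intro compact_UN) auto
    have "closure (W n) \<subseteq> (\<Union>i\<le>n. closure (V i))"
      unfolding W_def using compact_imp_closed[OF c] closure_subset by (intro closure_minimal) auto
    then show ?thesis using compact_Int_closed[OF c, of "closure (W n)"] by (simp add: Int_absorb1)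
  qed
  moreover have "(\<Union>n. W n) = UNIV"
  proof -
    have "x \<in> (\<Union>n. W n)" for x
    proof -
      obtain n where "x \<in> K n" using K(3) by blast
      then have "x \<in> W n" using V(2)[of n] unfolding W_def by blast
      then show ?thesis by blast
    qed
    then show ?thesis by blast
  qed
  ultimately show ?thesis by (rule that)
qed

definition cc_continuous :: "('a::topological_space \<Rightarrow> 'b::topological_space measure) \<Rightarrow> 'a set \<Rightarrow> bool" where
  "cc_continuous \<kappa> C \<longleftrightarrow> (\<forall>f::'b \<Rightarrow> real. continuous_on UNIV f \<longrightarrow> (\<forall>x. 0 \<le> f x) \<longrightarrow>
        compact (closure {x. f x \<noteq> 0}) \<longrightarrow>
        (\<forall>u\<in>C. (\<integral>\<^sup>+ x. ennreal (f x) \<partial>\<kappa> u) < \<infinity>) \<and>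
        continuous_on C (\<lambda>u. enn2real (\<integral>\<^sup>+ x. ennreal (f x) \<partial>\<kappa> u)))"

context
  fixes \<kappa> :: "'a::topological_space \<Rightarrow> 'b::{second_countable_topology,t2_space} measure" and C :: "'a set"
  assumes LC: "locally compact (UNIV :: 'b set)"
    and sets_\<kappa>: "\<And>u. u \<in> C \<Longrightarrow> sets (\<kappa> u) = sets borel"
    and cont: "cc_continuous \<kappa> C"
begin

lemma cc_continuous_emeasure_compact_finite:
  assumes K: "compact K" and u: "u \<in> C"
  shows "emeasure (\<kappa> u) K < \<infinity>"
proof -
  obtain \<phi> :: "'b \<Rightarrow> real" where \<phi>: "continuous_on UNIV \<phi>" "\<And>x. 0 \<le> \<phi> x \<and> \<phi> x \<le> 1"
    "\<And>x. x \<in> K \<Longrightarrow> \<phi> x = 1" "\<And>x. x \<notin> UNIV \<Longrightarrow> \<phi> x = 0" "compact (closure {x. \<phi> x \<noteq> 0})"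
    by (rule Urysohn_compact_support[OF LC K open_UNIV]) auto
  have "emeasure (\<kappa> u) K = (\<integral>\<^sup>+ x. indicator K x \<partial>\<kappa> u)"
    using sets_\<kappa>[OF u] compact_imp_closed[OF K] by simp
  also have "\<dots> \<le> (\<integral>\<^sup>+ x. ennreal (\<phi> x) \<partial>\<kappa> u)"
    using \<phi>(3) by (intro nn_integral_mono) (auto simp: indicator_def)
  also have "\<dots> < \<infinity>"
    using cont \<phi> u unfolding cc_continuous_def by blast
  finally show ?thesis .
qed

lemma cc_continuous_emeasure_relatively_compact_finite:
  assumes K: "compact (closure K)" and u: "u \<in> C"
  shows "emeasure (\<kappa> u) K < \<infinity>"
  using emeasure_mono[of K "closure K" "\<kappa> u", OF closure_subset] sets_\<kappa>[OF u]
    cc_continuous_emeasure_compact_finite[OF K u]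
  by (simp add: order_le_less_trans)

text \<open>An open set is the increasing union of compact sets \<open>K\<^sub>n\<close>; Urysohn functions between \<open>K\<^sub>n\<close>
  and \<open>U\<close> exhibit \<open>\<lambda>\<^sup>u(U)\<close> as a supremum of continuous functions of \<open>u\<close>.\<close>

lemma cc_continuous_measurable_emeasure_open:
  assumes U: "open U"
  shows "(\<lambda>u. emeasure (\<kappa> u) U) \<in> borel_measurable (restrict_space borel C)"
proof -
  obtain K :: "nat \<Rightarrow> 'b set" where K: "incseq K" "\<And>n. compact (K n)" "(\<Union>n. K n) = U"
    by (rule open_eq_Union_incseq_compact[OF LC U]) blast
  have "\<forall>n. \<exists>\<phi>::'b\<Rightarrow>real. continuous_on UNIV \<phi> \<and> (\<forall>x. 0 \<le> \<phi> x \<and> \<phi> x \<le> 1) \<and>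
     (\<forall>x\<in>K n. \<phi> x = 1) \<and> (\<forall>x. x \<notin> U \<longrightarrow> \<phi> x = 0) \<and> compact (closure {x. \<phi> x \<noteq> 0})"
  proof
    fix n
    obtain \<phi> :: "'b \<Rightarrow> real" where "continuous_on UNIV \<phi>" "\<And>x. 0 \<le> \<phi> x \<and> \<phi> x \<le> 1"
      "\<And>x. x \<in> K n \<Longrightarrow> \<phi> x = 1" "\<And>x. x \<notin> U \<Longrightarrow> \<phi> x = 0" "compact (closure {x. \<phi> x \<noteq> 0})"
      by (rule Urysohn_compact_support[OF LC K(2)[of n] U]) (use K(3) in blast, blast)
    then show "\<exists>\<phi>::'b\<Rightarrow>real. continuous_on UNIV \<phi> \<and> (\<forall>x. 0 \<le> \<phi> x \<and> \<phi> x \<le> 1) \<and>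
      (\<forall>x\<in>K n. \<phi> x = 1) \<and> (\<forall>x. x \<notin> U \<longrightarrow> \<phi> x = 0) \<and> compact (closure {x. \<phi> x \<noteq> 0})"
      by blast
  qed
  then obtain \<phi> :: "nat \<Rightarrow> 'b \<Rightarrow> real" where \<phi>: "\<forall>n. continuous_on UNIV (\<phi> n) \<and>
    (\<forall>x. 0 \<le> \<phi> n x \<and> \<phi> n x \<le> 1) \<and> (\<forall>x\<in>K n. \<phi> n x = 1) \<and> (\<forall>x. x \<notin> U \<longrightarrow> \<phi> n x = 0) \<and>
    compact (closure {x. \<phi> n x \<noteq> 0})"
    by (auto dest: choice)
  define g where "g n u = (\<integral>\<^sup>+ x. ennreal (\<phi> n x) \<partial>\<kappa> u)" for n u
  have g_finite: "g n u < \<infinity>" if "u \<in> C" for n u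
    using cont \<phi> that unfolding cc_continuous_def g_def by blast
  have measurable_g: "g n \<in> borel_measurable (restrict_space borel C)" for n
  proof -
    have "continuous_on C (\<lambda>u. enn2real (g n u))"
      using cont \<phi> unfolding cc_continuous_def g_def by blast
    then have "(\<lambda>u. ennreal (enn2real (g n u))) \<in> borel_measurable (restrict_space borel C)"
      by (intro measurable_compose[OF borel_measurable_continuous_on_restrict]) auto
    then show ?thesis
      by (rule measurable_cong[THEN iffD1, rotated])
        (use g_finite in \<open>auto simp: space_restrict_space intro: ennreal_enn2real\<close>)
  qed
  have eq: "emeasure (\<kappa> u) U = (SUP n. g n u)" if u: "u \<in> C" for u
  proof (rule antisym)
    have K_sets: "range K \<subseteq> sets (\<kappa> u)"
      using sets_\<kappa>[OF u] K(2) by (auto intro!: borel_closed compact_imp_closed)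
    have "emeasure (\<kappa> u) U = (SUP n. emeasure (\<kappa> u) (K n))"
      using SUP_emeasure_incseq[OF K_sets K(1)] K(3) by simp
    also have "\<dots> \<le> (SUP n. g n u)"
    proof (intro SUP_mono bexI)
      fix n
      have "emeasure (\<kappa> u) (K n) = (\<integral>\<^sup>+ x. indicator (K n) x \<partial>\<kappa> u)" using K_sets by simp
      also have "\<dots> \<le> g n u" unfolding g_def
        using \<phi> by (intro nn_integral_mono) (auto simp: indicator_def)
      finally show "emeasure (\<kappa> u) (K n) \<le> g n u" .
    qed simp
    finally show "emeasure (\<kappa> u) U \<le> (SUP n. g n u)" .
    show "(SUP n. g n u) \<le> emeasure (\<kappa> u) U"
    proof (intro SUP_least)
      fix n
      have "g n u \<le> (\<integral>\<^sup>+ x. indicator U x \<partial>\<kappa> u)" unfolding g_def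
        using \<phi> by (intro nn_integral_mono) (auto simp: indicator_def)
      also have "\<dots> = emeasure (\<kappa> u) U" using sets_\<kappa>[OF u] U by simp
      finally show "g n u \<le> emeasure (\<kappa> u) U" .
    qed
  qed
  have "(\<lambda>u. SUP n. g n u) \<in> borel_measurable (restrict_space borel C)"
    using measurable_g by measurable
  then show ?thesis
    by (rule measurable_cong[THEN iffD1, rotated]) (auto simp: space_restrict_space eq)
qed

text \<open>Dynkin's argument inside an open set of uniformly finite measure, where complements
  are differences of finite quantities.\<close>

lemma cc_continuous_measurable_emeasure_Int_open:
  assumes W: "open W" and W_finite: "\<And>u. u \<in> C \<Longrightarrow> emeasure (\<kappa> u) W < \<infinity>"
    and E: "E \<in> sets borel"
  shows "(\<lambda>u. emeasure (\<kappa> u) (E \<inter> W)) \<in> borel_measurable (restrict_space borel C)"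
proof -
  have "Int_stable {S::'b set. open S}" unfolding Int_stable_def by auto
  moreover have "{S::'b set. open S} \<subseteq> Pow UNIV" by auto
  moreover have "E \<in> sigma_sets UNIV {S. open S}" using E unfolding sets_borel .
  ultimately show ?thesis
  proof (induction rule: sigma_sets_induct_disjoint)
    case (basic A)
    then show ?case using cc_continuous_measurable_emeasure_open[of "A \<inter> W"] W by auto
  next
    case empty
    then show ?case by simp
  next
    case (compl A)
    have A: "A \<in> sets borel" unfolding sets_borel using compl(1) .
    have eq: "emeasure (\<kappa> u) W - emeasure (\<kappa> u) (A \<inter> W) = emeasure (\<kappa> u) ((UNIV - A) \<inter> W)"
      if u: "u \<in> C" for u
    proof -
      have "emeasure (\<kappa> u) (A \<inter> W) \<noteq> \<infinity>"
        using W_finite[OF u] emeasure_mono[of "A \<inter> W" W "\<kappa> u"] W sets_\<kappa>[OF u]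
        by (auto simp: top_unique)
      moreover have "(UNIV - A) \<inter> W = W - (A \<inter> W)" by blast
      ultimately show ?thesis using sets_\<kappa>[OF u] A W by (simp add: emeasure_Diff)
    qed
    have "(\<lambda>u. emeasure (\<kappa> u) W - emeasure (\<kappa> u) (A \<inter> W))
        \<in> borel_measurable (restrict_space borel C)"
      using cc_continuous_measurable_emeasure_open[OF W] compl(2) by measurable
    then show ?case
      by (rule measurable_cong[THEN iffD1, rotated]) (auto simp: space_restrict_space eq)
  next
    case (union A)
    have A: "\<And>i. A i \<in> sets borel" unfolding sets_borel using union(2) by auto
    have eq: "(\<Sum>i. emeasure (\<kappa> u) (A i \<inter> W)) = emeasure (\<kappa> u) ((\<Union>i. A i) \<inter> W)"
      if u: "u \<in> C" for u
    proof -
      have "(\<Sum>i. emeasure (\<kappa> u) (A i \<inter> W)) = emeasure (\<kappa> u) (\<Union>i. A i \<inter> W)"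
        using sets_\<kappa>[OF u] A W union(1)
        by (intro suminf_emeasure) (auto simp: disjoint_family_on_def, blast)
      then show ?thesis by simp
    qed
    have "(\<lambda>u. \<Sum>i. emeasure (\<kappa> u) (A i \<inter> W)) \<in> borel_measurable (restrict_space borel C)"
      using union(3) by measurable
    then show ?case
      by (rule measurable_cong[THEN iffD1, rotated]) (auto simp: space_restrict_space eq)
  qed
qed

lemma cc_continuous_measurable_emeasure:
  assumes E: "E \<in> sets borel"
  shows "(\<lambda>u. emeasure (\<kappa> u) E) \<in> borel_measurable (restrict_space borel C)"
proof -
  obtain W :: "nat \<Rightarrow> 'b set" where W: "incseq W" "\<And>n. open (W n)"
    "\<And>n. compact (closure (W n))" "(\<Union>n. W n) = UNIV"
    by (rule UNIV_eq_Union_incseq_relatively_compact_open[OF LC]) blast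
  have eq: "emeasure (\<kappa> u) E = (SUP n. emeasure (\<kappa> u) (E \<inter> W n))" if u: "u \<in> C" for u
  proof -
    have "(SUP n. emeasure (\<kappa> u) (E \<inter> W n)) = emeasure (\<kappa> u) (\<Union>n. E \<inter> W n)"
      using sets_\<kappa>[OF u] E W(1,2) by (intro SUP_emeasure_incseq) (auto simp: incseq_def)
    then show ?thesis using W(4) by simp
  qed
  have "(\<lambda>u. SUP n. emeasure (\<kappa> u) (E \<inter> W n)) \<in> borel_measurable (restrict_space borel C)"
    using cc_continuous_measurable_emeasure_Int_open[OF W(2)
        cc_continuous_emeasure_relatively_compact_finite[OF W(3)] E] by measurable
  then show ?thesis
    by (rule measurable_cong[THEN iffD1, rotated]) (auto simp: space_restrict_space eq)
qed

end

text \<open>Outside \<open>C\<close> the measures are irrelevant, which is expressed by multiplying with the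
  indicator of \<open>C\<close>.\<close>

locale measurable_kernel =
  fixes N :: "'y::topological_space \<Rightarrow> 'a::topological_space measure" and C :: "'y set"
  assumes sets_N: "\<And>y. y \<in> C \<Longrightarrow> sets (N y) = sets borel"
    and measurable_emeasure_N:
      "\<And>E. E \<in> sets borel \<Longrightarrow> (\<lambda>y. emeasure (N y) E * indicator C y) \<in> borel_measurable borel"
begin

lemma measurable_N_iff_borel: "y \<in> C \<Longrightarrow> f \<in> borel_measurable (N y) \<longleftrightarrow> f \<in> borel_measurable borel"
  using sets_N by (simp cong: measurable_cong_sets)

lemma nn_integral_N_indicator:
  "A \<in> sets borel \<Longrightarrow> (\<integral>\<^sup>+ a. indicator A a \<partial>N y) * indicator C y = emeasure (N y) A * indicator C y"
  by (cases "y \<in> C") (auto simp: sets_N)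

lemma nn_integral_N_cmult:
  "u \<in> borel_measurable borel \<Longrightarrow>
    (\<integral>\<^sup>+ a. c * u a \<partial>N y) * indicator C y = c * ((\<integral>\<^sup>+ a. u a \<partial>N y) * indicator C y)"
  by (cases "y \<in> C") (simp_all add: measurable_N_iff_borel nn_integral_cmult mult.assoc)

lemma nn_integral_N_add:
  "u \<in> borel_measurable borel \<Longrightarrow> v \<in> borel_measurable borel \<Longrightarrow>
    (\<integral>\<^sup>+ a. v a + u a \<partial>N y) * indicator C y =
      (\<integral>\<^sup>+ a. v a \<partial>N y) * indicator C y + (\<integral>\<^sup>+ a. u a \<partial>N y) * indicator C y"
  by (cases "y \<in> C") (simp_all add: measurable_N_iff_borel nn_integral_add distrib_right)

lemma nn_integral_N_SUP:
  assumes "\<And>i. U i \<in> borel_measurable borel" and "incseq U"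
  shows "(\<integral>\<^sup>+ a. (SUP i. U i) a \<partial>N y) * indicator C y = (SUP i. (\<integral>\<^sup>+ a. U i a \<partial>N y) * indicator C y)"
proof (cases "y \<in> C")
  case True
  then have "(\<integral>\<^sup>+ a. (SUP i. U i a) \<partial>N y) = (SUP i. (\<integral>\<^sup>+ a. U i a \<partial>N y))"
    using assms by (intro nn_integral_monotone_convergence_SUP) (simp_all add: measurable_N_iff_borel)
  then show ?thesis using True by (simp add: image_comp)
qed simp

lemma measurable_nn_integral_N:
  fixes f :: "'a \<Rightarrow> ennreal"
  assumes "f \<in> borel_measurable borel"
  shows "(\<lambda>y. (\<integral>\<^sup>+ a. f a \<partial>N y) * indicator C y) \<in> borel_measurable borel"
  using assms
proof (induction rule: borel_measurable_induct)
  case (cong f g)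
  then show ?case by simp
next
  case (set A)
  then show ?case using measurable_emeasure_N[OF set] by (simp add: nn_integral_N_indicator)
next
  case (mult u c)
  then show ?case by (simp add: nn_integral_N_cmult)
next
  case (add u v)
  then show ?case by (simp add: nn_integral_N_add)
next
  case (seq U)
  then show ?case using nn_integral_N_SUP[OF seq(1,3)] by simp
qed

text \<open>Finiteness of the measures of \<open>D\<close> makes the good sets closed under complements.\<close>

lemma measurable_emeasure_Pair_Int:
  assumes D: "D \<in> sets borel" and D_finite: "\<And>y. y \<in> C \<Longrightarrow> emeasure (N y) D < \<infinity>"
    and Z: "Z \<in> sets (borel \<Otimes>\<^sub>M borel :: ('x::topological_space \<times> 'a) measure)"
  shows "(\<lambda>z::'x \<times> 'y. emeasure (N (snd z)) (Pair (fst z) -` Z \<inter> D) * indicator C (snd z))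
           \<in> borel_measurable (borel \<Otimes>\<^sub>M borel)"
proof -
  let ?G = "{a \<times> b | a b. a \<in> sets (borel :: 'x measure) \<and> b \<in> sets (borel :: 'a measure)}"
  have slice_sets: "Pair x -` Z \<inter> D \<in> sets (N y)"
    if "y \<in> C" "Z \<in> sigma_sets (UNIV \<times> UNIV) ?G" for x y Z
  proof -
    have "Z \<in> sets (borel \<Otimes>\<^sub>M borel :: ('x \<times> 'a) measure)"
      using that(2) by (simp add: sets_pair_measure)
    then show ?thesis using sets_N[OF that(1)] D by (auto intro: sets_Pair1)
  qed
  have "Int_stable ?G" by (rule Int_stable_pair_measure_generator)
  moreover have "?G \<subseteq> Pow (UNIV \<times> UNIV)" by auto
  moreover have "Z \<in> sigma_sets (UNIV \<times> UNIV) ?G" using Z by (simp add: sets_pair_measure)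
  ultimately show ?thesis
  proof (induction rule: sigma_sets_induct_disjoint)
    case (basic Z)
    then obtain a b where Z: "Z = a \<times> b" "a \<in> sets borel" "b \<in> sets borel" by blast
    have "(\<lambda>y. emeasure (N y) (b \<inter> D) * indicator C y) \<in> borel_measurable borel"
      using measurable_emeasure_N Z(3) D by auto
    then have "(\<lambda>z::'x \<times> 'y. indicator a (fst z) * (emeasure (N (snd z)) (b \<inter> D) * indicator C (snd z)))
      \<in> borel_measurable (borel \<Otimes>\<^sub>M borel)"
      using Z(2) by measurable
    then show ?case
      by (rule measurable_cong[THEN iffD1, rotated]) (auto simp: Z indicator_def)
  next
    case empty
    then show ?case by simp
  next
    case (compl Z)
    have eq: "emeasure (N y) D * indicator C y - emeasure (N y) (Pair x -` Z \<inter> D) * indicator C y =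
        emeasure (N y) (Pair x -` (UNIV \<times> UNIV - Z) \<inter> D) * indicator C y" for x y
    proof (cases "y \<in> C")
      case True
      have "emeasure (N y) (Pair x -` Z \<inter> D) \<noteq> \<infinity>"
        using emeasure_mono[of "Pair x -` Z \<inter> D" D "N y"] D_finite[OF True] sets_N[OF True] D
        by (auto simp: top_unique)
      moreover have "Pair x -` (UNIV \<times> UNIV - Z) \<inter> D = D - (Pair x -` Z \<inter> D)" by auto
      ultimately show ?thesis
        using True slice_sets[OF True compl(1)] sets_N[OF True] D by (simp add: emeasure_Diff)
    qed simp
    have "(\<lambda>y. emeasure (N y) D * indicator C y) \<in> borel_measurable borel"
      using measurable_emeasure_N D by auto
    then have "(\<lambda>z::'x \<times> 'y. emeasure (N (snd z)) D * indicator C (snd z) -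
        emeasure (N (snd z)) (Pair (fst z) -` Z \<inter> D) * indicator C (snd z))
        \<in> borel_measurable (borel \<Otimes>\<^sub>M borel)"
      using compl(2) by measurable
    then show ?case
      by (rule measurable_cong[THEN iffD1, rotated]) (auto simp: eq)
  next
    case (union A)
    have eq: "(\<Sum>i. emeasure (N y) (Pair x -` A i \<inter> D)) * indicator C y =
        emeasure (N y) (Pair x -` (\<Union>i. A i) \<inter> D) * indicator C y" for x y
    proof (cases "y \<in> C")
      case True
      have "(\<Sum>i. emeasure (N y) (Pair x -` A i \<inter> D)) = emeasure (N y) (\<Union>i. Pair x -` A i \<inter> D)"
        using slice_sets[OF True] union(1,2)
        by (intro suminf_emeasure) (auto simp: disjoint_family_on_def, blast)
      moreover have "(\<Union>i. Pair x -` A i \<inter> D) = Pair x -` (\<Union>i. A i) \<inter> D" by auto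
      ultimately show ?thesis using True by simp
    qed simp
    have "(\<lambda>z::'x \<times> 'y. \<Sum>i. emeasure (N (snd z)) (Pair (fst z) -` A i \<inter> D) * indicator C (snd z))
       \<in> borel_measurable (borel \<Otimes>\<^sub>M borel)"
      using union(3) by measurable
    then show ?case
      by (rule measurable_cong[THEN iffD1, rotated]) (auto simp: eq)
  qed
qed

end

definition mixture :: "'y measure \<Rightarrow> ('y \<Rightarrow> 'a::topological_space measure) \<Rightarrow> 'y set \<Rightarrow> 'a measure" where
  "mixture M N C = measure_of UNIV (sets borel) (\<lambda>E. \<integral>\<^sup>+ y. emeasure (N y) E * indicator C y \<partial>M)"

lemma sets_measure_of_borel:
  "sets (measure_of UNIV (sets borel) \<mu>) = (sets borel :: 'a::topological_space set set)"
  by (metis sets.sigma_sets_eq sets.space_closed sets_measure_of space_borel)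

lemma sets_mixture [measurable_cong]: "sets (mixture M N C) = sets borel"
  unfolding mixture_def by (rule sets_measure_of_borel)

lemma measure_of_eq_mixture:
  assumes "\<And>E. E \<in> sets borel \<Longrightarrow> AE y in M. F y E = emeasure (N y) E * indicator C y"
  shows "measure_of UNIV (sets borel) (\<lambda>E. \<integral>\<^sup>+ y. F y E \<partial>M) = mixture M N C"
  unfolding mixture_def
  using assms sets.sigma_sets_eq[of "borel :: 'a measure"]
  by (intro measure_of_eq nn_integral_cong_AE) auto

context measurable_kernel
begin

lemma emeasure_mixture:
  assumes M: "sets M = sets borel" and E: "E \<in> sets borel"
  shows "emeasure (mixture M N C) E = (\<integral>\<^sup>+ y. emeasure (N y) E * indicator C y \<partial>M)"
  unfolding mixture_def
proof (rule emeasure_measure_of_sigma)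
  have measurable: "(\<lambda>y. emeasure (N y) E * indicator C y) \<in> borel_measurable M" if "E \<in> sets borel" for E
    using measurable_emeasure_N[OF that] M by (simp cong: measurable_cong_sets)
  show "countably_additive (sets borel) (\<lambda>E. \<integral>\<^sup>+ y. emeasure (N y) E * indicator C y \<partial>M)"
    unfolding countably_additive_def
  proof (intro allI impI)
    fix A :: "nat \<Rightarrow> 'a set"
    assume A: "range A \<subseteq> sets borel" "disjoint_family A" "\<Union> (range A) \<in> sets borel"
    have "(\<Sum>i. emeasure (N y) (A i) * indicator C y) = emeasure (N y) (\<Union> (range A)) * indicator C y"
      for y
      using A sets_N by (cases "y \<in> C") (simp_all add: suminf_emeasure)
    then show "(\<Sum>i. \<integral>\<^sup>+ y. emeasure (N y) (A i) * indicator C y \<partial>M) =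
        (\<integral>\<^sup>+ y. emeasure (N y) (\<Union> (range A)) * indicator C y \<partial>M)"
      using A(1) measurable by (subst nn_integral_suminf[symmetric]) auto
  qed
qed (use E sets.sigma_algebra_axioms[of borel] in \<open>auto simp: positive_def\<close>)

lemma nn_integral_mixture:
  assumes M: "sets M = sets borel" and f: "f \<in> borel_measurable borel"
  shows "(\<integral>\<^sup>+ a. f a \<partial>mixture M N C) = (\<integral>\<^sup>+ y. (\<integral>\<^sup>+ a. f a \<partial>N y) * indicator C y \<partial>M)"
  using f
proof (induction rule: borel_measurable_induct)
  case (cong f g)
  then show ?case by simp
next
  case (set A)
  then show ?case by (simp add: emeasure_mixture[OF M] nn_integral_N_indicator)
next
  case (mult u c)
  then show ?case
    using measurable_nn_integral_N[OF mult(2)] M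
    by (simp add: nn_integral_N_cmult nn_integral_cmult cong: measurable_cong_sets)
next
  case (add u v)
  then show ?case
    using measurable_nn_integral_N[OF add(1)] measurable_nn_integral_N[OF add(3)] M
    by (simp add: nn_integral_N_add nn_integral_add cong: measurable_cong_sets)
next
  case (seq U)
  have "incseq (\<lambda>i y. (\<integral>\<^sup>+ a. U i a \<partial>N y) * indicator C y)"
    using seq(3) by (intro incseq_SucI le_funI mult_right_mono nn_integral_mono)
      (auto simp: incseq_Suc_iff le_fun_def)
  moreover have "(\<lambda>y. (\<integral>\<^sup>+ a. U i a \<partial>N y) * indicator C y) \<in> borel_measurable M" for i
    using measurable_nn_integral_N[OF seq(1)] M by (simp cong: measurable_cong_sets)
  ultimately have "(SUP i. \<integral>\<^sup>+ y. (\<integral>\<^sup>+ a. U i a \<partial>N y) * indicator C y \<partial>M) =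
      (\<integral>\<^sup>+ y. (SUP i. (\<integral>\<^sup>+ a. U i a \<partial>N y) * indicator C y) \<partial>M)"
    by (intro nn_integral_monotone_convergence_SUP[symmetric]) auto
  moreover have "(\<integral>\<^sup>+ a. (SUP i. U i) a \<partial>mixture M N C) = (SUP i. (\<integral>\<^sup>+ a. U i a \<partial>mixture M N C))"
    using seq(1,3) by (simp add: image_comp nn_integral_monotone_convergence_SUP)
  ultimately show ?case
    using seq(5) nn_integral_N_SUP[OF seq(1,3)] by simp
qed

end

lemma nn_integral_return_pair_measure:
  assumes B: "sigma_finite_measure B" and f: "f \<in> borel_measurable (M \<Otimes>\<^sub>M B)" and g: "g \<in> space M"
  shows "(\<integral>\<^sup>+ z. f z \<partial>(return M g \<Otimes>\<^sub>M B)) = (\<integral>\<^sup>+ t. f (g, t) \<partial>B)"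
proof -
  interpret B: sigma_finite_measure B by (rule B)
  have f': "f \<in> borel_measurable (return M g \<Otimes>\<^sub>M B)"
    using f by (simp cong: measurable_cong_sets)
  have "(\<integral>\<^sup>+ z. f z \<partial>(return M g \<Otimes>\<^sub>M B)) = (\<integral>\<^sup>+ x. (\<integral>\<^sup>+ t. f (x, t) \<partial>B) \<partial>return M g)"
    using B.nn_integral_fst[OF f'] by simp
  also have "\<dots> = (\<integral>\<^sup>+ t. f (g, t) \<partial>B)"
    using B.borel_measurable_nn_integral_fst[OF f] g by (simp add: nn_integral_return)
  finally show ?thesis .
qed

lemma emeasure_return_pair_measure:
  assumes "sigma_finite_measure B" and "Z \<in> sets (M \<Otimes>\<^sub>M B)" and "g \<in> space M"
  shows "emeasure (return M g \<Otimes>\<^sub>M B) Z = emeasure B (Pair g -` Z)"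
proof -
  have "emeasure (return M g \<Otimes>\<^sub>M B) Z = (\<integral>\<^sup>+ z. indicator Z z \<partial>(return M g \<Otimes>\<^sub>M B))"
    using assms(2) by (simp cong: sets_pair_measure_cong)
  also have "\<dots> = (\<integral>\<^sup>+ t. indicator Z (g, t) \<partial>B)"
    using assms by (intro nn_integral_return_pair_measure) auto
  also have "\<dots> = emeasure B (Pair g -` Z)"
  proof -
    have "(\<lambda>t. indicator Z (g, t) :: ennreal) = indicator (Pair g -` Z)"
      by (auto simp: indicator_def)
    then show ?thesis using sets_Pair1[OF assms(2)] by simp
  qed
  finally show ?thesis .
qed

lemma sets_pair_return_pair:
  fixes A :: "'s::second_countable_topology measure" and B :: "'t::second_countable_topology measure"
    and g :: "'g::second_countable_topology"
  assumes "sets A = sets borel" and "sets B = sets borel"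
  shows "sets (A \<Otimes>\<^sub>M (return borel g \<Otimes>\<^sub>M B)) = sets (borel :: ('s \<times> 'g \<times> 't) measure)"
  using assms by (simp add: borel_prod[symmetric] cong: sets_pair_measure_cong)

lemma nn_integral_pair_return_pair:
  fixes A :: "'s::second_countable_topology measure" and B :: "'t::second_countable_topology measure"
    and g :: "'g::second_countable_topology"
  assumes A: "sets A = sets borel" "sigma_finite_measure A"
    and B: "sets B = sets borel" "sigma_finite_measure B"
    and h: "h \<in> borel_measurable (borel :: ('s \<times> 'g \<times> 't) measure)"
  shows "(\<integral>\<^sup>+ z. h z \<partial>(A \<Otimes>\<^sub>M (return borel g \<Otimes>\<^sub>M B))) = (\<integral>\<^sup>+ s. (\<integral>\<^sup>+ t. h (s, g, t) \<partial>B) \<partial>A)"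
proof -
  interpret B: sigma_finite_measure B by (rule B(2))
  interpret R: prob_space "return borel g" by (rule prob_space_return) simp
  interpret RB: pair_sigma_finite "return borel g" B ..
  have h': "h \<in> borel_measurable (A \<Otimes>\<^sub>M (return borel g \<Otimes>\<^sub>M B))"
    using h by (simp add: measurable_cong_sets[OF sets_pair_return_pair[OF A(1) B(1)] refl])
  have "(\<lambda>w. h (s, w)) \<in> borel_measurable (borel \<Otimes>\<^sub>M B)" for s
    using h B(1) by (simp add: borel_prod[symmetric] cong: measurable_cong_sets sets_pair_measure_cong)
  then have "(\<integral>\<^sup>+ w. h (s, w) \<partial>(return borel g \<Otimes>\<^sub>M B)) = (\<integral>\<^sup>+ t. h (s, g, t) \<partial>B)" for s
    using B(2) by (intro nn_integral_return_pair_measure) auto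
  then show ?thesis
    using RB.P.nn_integral_fst[OF h', symmetric] by simp
qed

text \<open>The exhaustion by sets of finite measure is common to all measures of the family; this is
  what makes slices of product sets measurable in the index.\<close>

locale sigma_finite_kernel = measurable_kernel N C
  for N :: "'y::second_countable_topology \<Rightarrow> 'a::second_countable_topology measure" and C :: "'y set" +
  assumes uniform_exhaustion: "\<exists>D::nat \<Rightarrow> 'a set. incseq D \<and> range D \<subseteq> sets borel \<and>
      (\<Union>n. D n) = UNIV \<and> (\<forall>y\<in>C. \<forall>n. emeasure (N y) (D n) < \<infinity>)"
begin

lemma sigma_finite:
  assumes y: "y \<in> C"
  shows "sigma_finite_measure (N y)"
proof
  obtain D :: "nat \<Rightarrow> 'a set" where D: "range D \<subseteq> sets borel" "(\<Union>n. D n) = UNIV"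
    "\<And>n. emeasure (N y) (D n) < \<infinity>"
    using uniform_exhaustion y by blast
  show "\<exists>A. countable A \<and> A \<subseteq> sets (N y) \<and> \<Union> A = space (N y) \<and> (\<forall>a\<in>A. emeasure (N y) a \<noteq> \<infinity>)"
    using D sets_N[OF y] sets_eq_imp_space_eq[OF sets_N[OF y]]
    by (intro exI[of _ "range D"]) (auto simp: less_top)
qed

lemma measurable_emeasure_Pair:
  assumes Z: "Z \<in> sets (borel \<Otimes>\<^sub>M borel :: ('x::topological_space \<times> 'a) measure)"
  shows "(\<lambda>z::'x \<times> 'y. emeasure (N (snd z)) (Pair (fst z) -` Z) * indicator C (snd z))
           \<in> borel_measurable (borel \<Otimes>\<^sub>M borel)"
proof -
  obtain D :: "nat \<Rightarrow> 'a set" where D: "incseq D" "range D \<subseteq> sets borel" "(\<Union>n. D n) = UNIV"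
    "\<And>y n. y \<in> C \<Longrightarrow> emeasure (N y) (D n) < \<infinity>"
    using uniform_exhaustion by blast
  have eq: "(SUP n. emeasure (N y) (Pair x -` Z \<inter> D n) * indicator C y) =
      emeasure (N y) (Pair x -` Z) * indicator C y" for x y
  proof (cases "y \<in> C")
    case True
    have "(SUP n. emeasure (N y) (Pair x -` Z \<inter> D n)) = emeasure (N y) (\<Union>n. Pair x -` Z \<inter> D n)"
      using sets_N[OF True] Z D(1,2)
      by (intro SUP_emeasure_incseq) (auto intro: sets_Pair1 simp: incseq_def)
    then show ?thesis using True D(3) by simp
  qed simp
  have "(\<lambda>z::'x \<times> 'y. emeasure (N (snd z)) (Pair (fst z) -` Z \<inter> D n) * indicator C (snd z))
      \<in> borel_measurable (borel \<Otimes>\<^sub>M borel)" for n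
    using D(2) by (intro measurable_emeasure_Pair_Int[OF _ D(4) Z]) auto
  then have "(\<lambda>z::'x \<times> 'y. SUP n. emeasure (N (snd z)) (Pair (fst z) -` Z \<inter> D n) * indicator C (snd z))
      \<in> borel_measurable (borel \<Otimes>\<^sub>M borel)"
    by measurable
  then show ?thesis
    by (rule measurable_cong[THEN iffD1, rotated]) (auto simp: eq)
qed

text \<open>The measures \<open>\<delta>\<^sub>x \<times> N\<^sub>y\<close> form a measurable kernel by the previous lemma, which gives joint
  measurability of \<open>(x, y) \<mapsto> \<integral> g(x, a) dN\<^sub>y(a)\<close>.\<close>

lemma measurable_nn_integral_Pair:
  fixes g :: "'x::second_countable_topology \<times> 'a \<Rightarrow> ennreal"
  assumes g: "g \<in> borel_measurable borel"
  shows "(\<lambda>z::'x \<times> 'y. (\<integral>\<^sup>+ a. g (fst z, a) \<partial>N (snd z)) * indicator C (snd z)) \<in> borel_measurable borel"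
proof -
  have sets_pair: "sets (return borel (fst z) \<Otimes>\<^sub>M N (snd z)) = sets (borel :: ('x \<times> 'a) measure)"
    if "snd z \<in> C" for z :: "'x \<times> 'y"
    using sets_N[OF that] by (simp add: borel_prod[symmetric] cong: sets_pair_measure_cong)
  interpret K: measurable_kernel "\<lambda>z::'x \<times> 'y. return borel (fst z) \<Otimes>\<^sub>M N (snd z)" "UNIV \<times> C"
  proof
    show "sets (return borel (fst z) \<Otimes>\<^sub>M N (snd z)) = sets borel" if "z \<in> UNIV \<times> C"
      for z :: "'x \<times> 'y"
      using that by (intro sets_pair) auto
  next
    fix E :: "('x \<times> 'a) set" assume E: "E \<in> sets borel"
    have "emeasure (return borel (fst z) \<Otimes>\<^sub>M N (snd z)) E * indicator (UNIV \<times> C) z =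
        emeasure (N (snd z)) (Pair (fst z) -` E) * indicator C (snd z)" for z :: "'x \<times> 'y"
      using E sets_pair[of z]
      by (cases "snd z \<in> C") (simp_all add: emeasure_return_pair_measure sigma_finite indicator_def mem_Times_iff)
    moreover have "(\<lambda>z::'x \<times> 'y. emeasure (N (snd z)) (Pair (fst z) -` E) * indicator C (snd z))
        \<in> borel_measurable borel"
    proof -
      have "E \<in> sets (borel \<Otimes>\<^sub>M borel :: ('x \<times> 'a) measure)" using E unfolding borel_prod .
      from measurable_emeasure_Pair[OF this] show ?thesis unfolding borel_prod .
    qed
    ultimately show "(\<lambda>z. emeasure (return borel (fst z) \<Otimes>\<^sub>M N (snd z)) E * indicator (UNIV \<times> C) z)
        \<in> borel_measurable borel"
      by simp
  qed
  have "(\<integral>\<^sup>+ w. g w \<partial>(return borel (fst z) \<Otimes>\<^sub>M N (snd z))) * indicator (UNIV \<times> C) z =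
      (\<integral>\<^sup>+ a. g (fst z, a) \<partial>N (snd z)) * indicator C (snd z)" for z :: "'x \<times> 'y"
    using g sets_N[of "snd z"]
    by (cases "snd z \<in> C")
      (simp_all add: nn_integral_return_pair_measure sigma_finite borel_prod[symmetric] indicator_def
        mem_Times_iff cong: measurable_cong_sets sets_pair_measure_cong)
  then show ?thesis
    using K.measurable_nn_integral_N[OF g] by simp
qed

end

lemma measurable_nn_integral_two_kernels:
  fixes N1 :: "'y1::second_countable_topology \<Rightarrow> 's::second_countable_topology measure"
    and N2 :: "'y2::second_countable_topology \<Rightarrow> 't::second_countable_topology measure"
    and h :: "'s \<times> 'g::second_countable_topology \<times> 't \<Rightarrow> ennreal"
  assumes k1: "sigma_finite_kernel N1 C1" and k2: "sigma_finite_kernel N2 C2"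
    and h: "h \<in> borel_measurable borel"
  shows "(\<lambda>(y1, g, y2). (\<integral>\<^sup>+ \<sigma>. (\<integral>\<^sup>+ \<tau>. h (\<sigma>, g, \<tau>) \<partial>N2 y2) \<partial>N1 y1) * indicator C1 y1 * indicator C2 y2)
      \<in> borel_measurable borel"
proof -
  interpret k1: sigma_finite_kernel N1 C1 by (rule k1)
  interpret k2: sigma_finite_kernel N2 C2 by (rule k2)
  define A where "A z = (\<integral>\<^sup>+ \<tau>. h (fst (fst z), snd (fst z), \<tau>) \<partial>N2 (snd z)) * indicator C2 (snd z)"
    for z :: "('s \<times> 'g) \<times> 'y2"
  have "(\<lambda>z::('s \<times> 'g) \<times> 't. h (fst (fst z), snd (fst z), snd z)) \<in> borel_measurable borel"
    using h unfolding borel_prod[symmetric] by measurable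
  from k2.measurable_nn_integral_Pair[OF this] have "A \<in> borel_measurable borel"
    unfolding A_def by simp
  then have "(\<lambda>z::('g \<times> 'y2) \<times> 's. A ((snd z, fst (fst z)), snd (fst z))) \<in> borel_measurable borel"
    unfolding borel_prod[symmetric] by measurable
  from k1.measurable_nn_integral_Pair[OF this]
  have "(\<lambda>w::('g \<times> 'y2) \<times> 'y1. (\<integral>\<^sup>+ \<sigma>. A ((\<sigma>, fst (fst w)), snd (fst w)) \<partial>N1 (snd w)) * indicator C1 (snd w))
      \<in> borel_measurable borel"
    by simp
  moreover have "(\<lambda>(y1, g, y2). ((g, y2), y1)) \<in> (borel :: ('y1 \<times> 'g \<times> 'y2) measure) \<rightarrow>\<^sub>M borel"
    unfolding borel_prod[symmetric] by measurable
  ultimately have "(\<lambda>(y1, g, y2). (\<integral>\<^sup>+ \<sigma>. A ((\<sigma>, g), y2) \<partial>N1 y1) * indicator C1 y1) \<in> borel_measurable borel"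
    by (subst measurable_cong[where g="(\<lambda>w. (\<integral>\<^sup>+ \<sigma>. A ((\<sigma>, fst (fst w)), snd (fst w)) \<partial>N1 (snd w))
        * indicator C1 (snd w)) \<circ> (\<lambda>(y1, g, y2). ((g, y2), y1))"])
      (auto simp: split_beta intro: measurable_comp)
  moreover have "(\<integral>\<^sup>+ \<sigma>. A ((\<sigma>, g), y2) \<partial>N1 y1) * indicator C1 y1 =
      (\<integral>\<^sup>+ \<sigma>. (\<integral>\<^sup>+ \<tau>. h (\<sigma>, g, \<tau>) \<partial>N2 y2) \<partial>N1 y1) * indicator C1 y1 * indicator C2 y2" for y1 g y2
    unfolding A_def by (cases "y2 \<in> C2") auto
  ultimately show ?thesis by simp
qed

lemma AE_bsm_fibre:
  assumes "bsm X Y \<pi> \<gamma>" and "y \<in> Y" and "X \<in> sets borel" and "\<pi> -` {y} \<in> sets borel"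
  shows "AE x in \<gamma> y. x \<in> X \<and> \<pi> x = y"
proof (rule AE_I')
  show "- (X \<inter> \<pi> -` {y}) \<in> null_sets (\<gamma> y)"
    using assms unfolding bsm_def by (auto simp: null_sets_def)
qed auto

lemma continuous_on_rg_dm:
  assumes "top_groupoid H"
  shows "continuous_on UNIV (rg H)" "continuous_on UNIV (dm H)"
proof -
  have g: "groupoid H" and m: "continuous_on {(x, y). dm H x = rg H y} (\<lambda>(x, y). mul H x y)"
    and i: "continuous_on UNIV (iv H)" using assms unfolding top_groupoid_def by auto
  have ax: "\<And>x. mul H x (iv H x) = rg H x" "\<And>x. rg H (iv H x) = dm H x"
    using g unfolding groupoid_def by auto
  have "continuous_on UNIV (\<lambda>x. (\<lambda>(x, y). mul H x y) (x, iv H x))"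
    by (rule continuous_on_compose2[OF m]) (auto intro!: continuous_intros i simp: ax)
  then show c: "continuous_on UNIV (rg H)" by (simp add: ax)
  have "continuous_on UNIV (\<lambda>x. rg H (iv H x))"
    by (rule continuous_on_compose2[OF c i]) auto
  then show "continuous_on UNIV (dm H)" by (simp add: ax)
qed

lemma units_eq_fixpoints_rg: "groupoid H \<Longrightarrow> units H = {x. rg H x = x}"
  unfolding units_def groupoid_def by auto (metis rangeI)

lemma closed_units:
  fixes H :: "('a::t2_space, 'b) hgpd_scheme"
  assumes "top_groupoid H" shows "closed (units H)"
  using assms continuous_on_rg_dm(1)[OF assms]
  by (simp add: units_eq_fixpoints_rg top_groupoid_def closed_Collect_eq continuous_on_id)

lemma rg_in_units: "rg H x \<in> units H"
  unfolding units_def by simp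

lemma dm_in_units: "groupoid H \<Longrightarrow> dm H x \<in> units H"
  by (simp add: units_eq_fixpoints_rg) (simp add: groupoid_def)

lemma haar_groupoid_sigma_finite_kernel:
  fixes H :: "('a::{second_countable_topology,t2_space}, 'b) hgpd_scheme"
  assumes "haar_groupoid H"
  shows "sigma_finite_kernel (haar H) (units H)"
proof -
  have tg: "top_groupoid H" and hs: "haar_system H" using assms unfolding haar_groupoid_def by auto
  have LC: "locally compact (UNIV :: 'a set)" using tg unfolding top_groupoid_def by auto
  have sets: "\<forall>u\<in>units H. sets (haar H u) = sets borel"
    using hs unfolding haar_system_def by (elim conjE) assumption
  have cont: "cc_continuous (haar H) (units H)"
    using hs unfolding haar_system_def cc_continuous_def by (elim conjE) assumption
  obtain W :: "nat \<Rightarrow> 'a set" where W: "incseq W" "\<And>n. open (W n)" "\<And>n. compact (closure (W n))"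
    "(\<Union>n. W n) = UNIV"
    by (rule UNIV_eq_Union_incseq_relatively_compact_open[OF LC]) blast
  show ?thesis
  proof
    show "(\<lambda>u. emeasure (haar H u) E * indicator (units H) u) \<in> borel_measurable borel"
      if "E \<in> sets borel" for E
      using cc_continuous_measurable_emeasure[OF LC _ cont that] sets closed_units[OF tg]
      by (simp add: borel_measurable_restrict_space_iff_ennreal)
    show "\<exists>D. incseq D \<and> range D \<subseteq> sets borel \<and> (\<Union>n. D n) = UNIV \<and>
        (\<forall>u\<in>units H. \<forall>n. emeasure (haar H u) (D n) < \<infinity>)"
      using W cc_continuous_emeasure_relatively_compact_finite[OF LC _ cont W(3)] sets
      by (intro exI[of _ W]) auto
  qed (use sets in blast)
qed

lemma bsm_sigma_finite_kernel:
  fixes S :: "('s::{second_countable_topology,t2_space}, 'a) hgpd_scheme"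
    and G :: "('g::{second_countable_topology,t2_space}, 'b) hgpd_scheme"
  assumes tS: "top_groupoid S" and tG: "top_groupoid G" and p: "continuous_on UNIV p"
    and bsm: "bsm (units S) (units G) p \<gamma>" and loc_finite: "loc_finite_bsm (units S) (units G) \<gamma>"
  shows "sigma_finite_kernel \<gamma> (units G)"
proof -
  have LC: "locally compact (UNIV :: 's set)" using tS unfolding top_groupoid_def by auto
  obtain K :: "nat \<Rightarrow> 's set" where K: "incseq K" "\<And>n. compact (K n)" "(\<Union>n. K n) = UNIV"
    by (rule open_eq_Union_incseq_compact[OF LC open_UNIV]) blast
  have units_S: "units S \<in> sets borel" using closed_units[OF tS] by simp
  have sets: "\<And>y. y \<in> units G \<Longrightarrow> sets (\<gamma> y) = sets borel"
    and null: "\<And>y. y \<in> units G \<Longrightarrow> emeasure (\<gamma> y) (- (units S \<inter> p -` {y})) = 0"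
    and measurable: "\<And>E. E \<in> sets borel \<Longrightarrow> (\<lambda>y. emeasure (\<gamma> y) E) \<in> borel_measurable (restrict_space borel (units G))"
    using bsm unfolding bsm_def by blast+
  text \<open>The measures live on \<open>units S\<close>, so enlarging the compact sets \<open>K\<^sub>n \<inter> units S\<close> by the
    null set \<open>- units S\<close> yields an exhaustion of the whole space.\<close>
  define D where "D n = (K n \<inter> units S) \<union> - units S" for n
  have "emeasure (\<gamma> y) (D n) < \<infinity>" if y: "y \<in> units G" for y n
  proof -
    have c: "compact (K n \<inter> units S)" using compact_Int_closed[OF K(2) closed_units[OF tS]] .
    have "closed (p -` {y})" by (rule closed_vimage[OF closed_singleton p])
    then have "emeasure (\<gamma> y) (- units S) = 0"
      using emeasure_mono[of "- units S" "- (units S \<inter> p -` {y})" "\<gamma> y"] null[OF y] sets[OF y] units_S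
      by auto
    moreover have "emeasure (\<gamma> y) (D n) \<le> emeasure (\<gamma> y) (K n \<inter> units S) + emeasure (\<gamma> y) (- units S)"
      unfolding D_def using sets[OF y] c units_S
      by (intro emeasure_subadditive) (auto intro!: borel_closed compact_imp_closed)
    moreover have "emeasure (\<gamma> y) (K n \<inter> units S) < \<infinity>"
      using loc_finite y c unfolding loc_finite_bsm_def by blast
    ultimately show ?thesis by (simp add: order_le_less_trans)
  qed
  moreover have "incseq D" using K(1) unfolding D_def incseq_def by blast
  moreover have "range D \<subseteq> sets borel"
  proof -
    have "K n \<in> sets borel" for n using K(2) by (intro borel_closed compact_imp_closed)
    then show ?thesis unfolding D_def using units_S by auto
  qed
  moreover have "(\<Union>n. D n) = UNIV" using K(3) unfolding D_def by blast
  ultimately show ?thesis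
    using sets measurable closed_units[OF tG]
    by unfold_locales (auto simp: borel_measurable_restrict_space_iff_ennreal)
qed

lemma nn_integral_induced:
  fixes H :: "('a::{second_countable_topology,t2_space}, 'b) hgpd_scheme"
  assumes H: "haar_groupoid H" and h: "h \<in> borel_measurable borel"
  shows "(\<integral>\<^sup>+ x. h x \<partial>induced H) = (\<integral>\<^sup>+ u. (\<integral>\<^sup>+ x. h x \<partial>haar H u) \<partial>mu0 H)"
proof -
  interpret H: sigma_finite_kernel "haar H" "units H"
    using H by (rule haar_groupoid_sigma_finite_kernel)
  have sets_mu0: "sets (mu0 H) = sets borel" and null: "emeasure (mu0 H) (- units H) = 0"
    using H unfolding haar_groupoid_def quasi_inv_radon_def by auto
  have top: "top_groupoid H" using H unfolding haar_groupoid_def by auto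
  have AE_units: "AE u in mu0 H. u \<in> units H"
    using null closed_units[OF top] sets_mu0 by (intro AE_I'[of "- units H"]) (auto simp: null_sets_def)
  have "induced H = mixture (mu0 H) (haar H) (units H)"
    unfolding induced_def by (rule measure_of_eq_mixture) (use AE_units in auto)
  then have "(\<integral>\<^sup>+ x. h x \<partial>induced H) = (\<integral>\<^sup>+ u. (\<integral>\<^sup>+ x. h x \<partial>haar H u) * indicator (units H) u \<partial>mu0 H)"
    using H.nn_integral_mixture[OF sets_mu0 h] by simp
  also have "\<dots> = (\<integral>\<^sup>+ u. (\<integral>\<^sup>+ x. h x \<partial>haar H u) \<partial>mu0 H)"
    using AE_units by (intro nn_integral_cong_AE) auto
  finally show ?thesis .
qed

locale weak_pullback =
  fixes S :: "('s::{second_countable_topology, t2_space}) hgpd"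
    and G :: "('g::{second_countable_topology, t2_space}) hgpd"
    and T :: "('t::{second_countable_topology, t2_space}) hgpd"
    and p :: "'s \<Rightarrow> 'g" and q :: "'t \<Rightarrow> 'g"
    and \<gamma>p :: "'g \<Rightarrow> 's measure" and \<gamma>q :: "'g \<Rightarrow> 't measure"
  assumes haar_S: "haar_groupoid S" and haar_G: "haar_groupoid G" and haar_T: "haar_groupoid T"
    and hom_p: "haar_hom S G p" and hom_q: "haar_hom T G q"
    and bsm_p: "bsm (units S) (units G) p \<gamma>p" and loc_finite_p: "loc_finite_bsm (units S) (units G) \<gamma>p"
    and bsm_q: "bsm (units T) (units G) q \<gamma>q" and loc_finite_q: "loc_finite_bsm (units T) (units G) \<gamma>q"
begin

abbreviation units_P :: "('s \<times> 'g \<times> 't) set" where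
  "units_P \<equiv> wp_units S G T p q"

lemma top_S: "top_groupoid S" and top_G: "top_groupoid G" and top_T: "top_groupoid T"
  using haar_S haar_G haar_T unfolding haar_groupoid_def by auto

lemma groupoid_G: "groupoid G"
  using top_G unfolding top_groupoid_def by auto

lemma continuous_p: "continuous_on UNIV p" and continuous_q: "continuous_on UNIV q"
  using hom_p hom_q unfolding haar_hom_def by auto

sublocale S_haar: sigma_finite_kernel "haar S" "units S"
  by (rule haar_groupoid_sigma_finite_kernel[OF haar_S])

sublocale T_haar: sigma_finite_kernel "haar T" "units T"
  by (rule haar_groupoid_sigma_finite_kernel[OF haar_T])

sublocale p_bsm: sigma_finite_kernel \<gamma>p "units G"
  by (rule bsm_sigma_finite_kernel[OF top_S top_G continuous_p bsm_p loc_finite_p])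

sublocale q_bsm: sigma_finite_kernel \<gamma>q "units G"
  by (rule bsm_sigma_finite_kernel[OF top_T top_G continuous_q bsm_q loc_finite_q])

lemma measurable_structure [measurable]:
  "rg G \<in> borel_measurable borel" "dm G \<in> borel_measurable borel"
  "p \<in> borel_measurable borel" "q \<in> borel_measurable borel"
  "units S \<in> sets borel" "units T \<in> sets borel"
  using continuous_on_rg_dm[OF top_G] continuous_p continuous_q closed_units[OF top_S] closed_units[OF top_T]
  by (auto intro: borel_measurable_continuous_onI)

lemma sets_units_P: "units_P \<in> sets borel"
proof -
  have "{v \<in> space (borel \<Otimes>\<^sub>M (borel \<Otimes>\<^sub>M borel)). fst v \<in> units S \<and> snd (snd v) \<in> units T \<and>
      rg G (fst (snd v)) = p (fst v) \<and> dm G (fst (snd v)) = q (snd (snd v))}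
      \<in> sets (borel \<Otimes>\<^sub>M (borel \<Otimes>\<^sub>M borel) :: ('s \<times> 'g \<times> 't) measure)"
    by measurable
  moreover have "{v \<in> space (borel \<Otimes>\<^sub>M (borel \<Otimes>\<^sub>M borel)). fst v \<in> units S \<and> snd (snd v) \<in> units T \<and>
      rg G (fst (snd v)) = p (fst v) \<and> dm G (fst (snd v)) = q (snd (snd v))} = units_P"
    unfolding wp_units_def by (auto simp: space_pair_measure)
  ultimately show ?thesis unfolding borel_prod by (simp only:)
qed

lemma sets_wp_haar: "v \<in> units_P \<Longrightarrow> sets (wp_haar S T v) = sets borel"
  by (auto simp: wp_haar_def wp_units_def S_haar.sets_N T_haar.sets_N intro!: sets_pair_return_pair)

lemma nn_integral_wp_haar:
  assumes h: "h \<in> borel_measurable borel" and v: "(s, g, t) \<in> units_P"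
  shows "(\<integral>\<^sup>+ z. h z \<partial>wp_haar S T (s, g, t)) = (\<integral>\<^sup>+ \<sigma>. (\<integral>\<^sup>+ \<tau>. h (\<sigma>, g, \<tau>) \<partial>haar T t) \<partial>haar S s)"
  using v unfolding wp_haar_def wp_units_def
  by (auto intro!: nn_integral_pair_return_pair h S_haar.sets_N T_haar.sets_N
      S_haar.sigma_finite T_haar.sigma_finite)

lemma measurable_nn_integral_wp_haar:
  assumes h: "h \<in> borel_measurable borel"
  shows "(\<lambda>v. (\<integral>\<^sup>+ z. h z \<partial>wp_haar S T v) * indicator units_P v) \<in> borel_measurable borel"
proof -
  have "(\<lambda>(s, g, t). (\<integral>\<^sup>+ \<sigma>. (\<integral>\<^sup>+ \<tau>. h (\<sigma>, g, \<tau>) \<partial>haar T t) \<partial>haar S s)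
      * indicator (units S) s * indicator (units T) t) \<in> borel_measurable borel"
    by (rule measurable_nn_integral_two_kernels[OF S_haar.sigma_finite_kernel_axioms
          T_haar.sigma_finite_kernel_axioms h])
  moreover have "(\<integral>\<^sup>+ z. h z \<partial>wp_haar S T v) * indicator units_P v =
      (case v of (s, g, t) \<Rightarrow> (\<integral>\<^sup>+ \<sigma>. (\<integral>\<^sup>+ \<tau>. h (\<sigma>, g, \<tau>) \<partial>haar T t) \<partial>haar S s)
        * indicator (units S) s * indicator (units T) t) * indicator units_P v" for v
    by (cases v; cases "v \<in> units_P") (auto simp: nn_integral_wp_haar[OF h] wp_units_def)
  ultimately show ?thesis
    using sets_units_P by simp
qed

lemma sets_wp_eta: "sets (wp_eta G \<gamma>p \<gamma>q x) = sets borel"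
  unfolding wp_eta_def using rg_in_units dm_in_units[OF groupoid_G]
  by (intro sets_pair_return_pair p_bsm.sets_N q_bsm.sets_N)

lemma nn_integral_wp_eta:
  assumes h: "h \<in> borel_measurable borel"
  shows "(\<integral>\<^sup>+ z. h z \<partial>wp_eta G \<gamma>p \<gamma>q x) = (\<integral>\<^sup>+ s. (\<integral>\<^sup>+ t. h (s, x, t) \<partial>\<gamma>q (dm G x)) \<partial>\<gamma>p (rg G x))"
  unfolding wp_eta_def using rg_in_units dm_in_units[OF groupoid_G]
  by (intro nn_integral_pair_return_pair h p_bsm.sets_N q_bsm.sets_N p_bsm.sigma_finite q_bsm.sigma_finite)

lemma measurable_nn_integral_wp_eta:
  assumes h: "h \<in> borel_measurable borel"
  shows "(\<lambda>x. \<integral>\<^sup>+ z. h z \<partial>wp_eta G \<gamma>p \<gamma>q x) \<in> borel_measurable borel"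
proof -
  have kernels: "(\<lambda>(s, g, t). (\<integral>\<^sup>+ \<sigma>. (\<integral>\<^sup>+ \<tau>. h (\<sigma>, g, \<tau>) \<partial>\<gamma>q t) \<partial>\<gamma>p s)
      * indicator (units G) s * indicator (units G) t) \<in> borel_measurable borel"
    by (rule measurable_nn_integral_two_kernels[OF p_bsm.sigma_finite_kernel_axioms
          q_bsm.sigma_finite_kernel_axioms h])
  have "(\<lambda>x. (rg G x, x, dm G x)) \<in> borel \<rightarrow>\<^sub>M (borel :: ('g \<times> 'g \<times> 'g) measure)"
    unfolding borel_prod[symmetric] by measurable
  from measurable_compose[OF this kernels]
  have "(\<lambda>x. (\<integral>\<^sup>+ \<sigma>. (\<integral>\<^sup>+ \<tau>. h (\<sigma>, x, \<tau>) \<partial>\<gamma>q (dm G x)) \<partial>\<gamma>p (rg G x))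
      * indicator (units G) (rg G x) * indicator (units G) (dm G x)) \<in> borel_measurable borel"
    by simp
  then show ?thesis
    by (simp add: nn_integral_wp_eta[OF h] rg_in_units dm_in_units[OF groupoid_G])
qed

lemma nn_integral_wp_induced:
  assumes f: "f \<in> borel_measurable borel"
  shows "(\<integral>\<^sup>+ z. f z \<partial>wp_induced S G T p q \<gamma>p \<gamma>q) =
    (\<integral>\<^sup>+ v. (\<integral>\<^sup>+ z. f z \<partial>wp_haar S T v) * indicator units_P v \<partial>wp_mu0 G \<gamma>p \<gamma>q)"
proof -
  interpret P_haar: measurable_kernel "wp_haar S T" units_P
  proof
    show "(\<lambda>v. emeasure (wp_haar S T v) E * indicator units_P v) \<in> borel_measurable borel"
      if E: "E \<in> sets borel" for E
    proof -
      have "(\<integral>\<^sup>+ z. indicator E z \<partial>wp_haar S T v) * indicator units_P v =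
          emeasure (wp_haar S T v) E * indicator units_P v" for v
        using E sets_wp_haar[of v] by (cases "v \<in> units_P") auto
      then show ?thesis using measurable_nn_integral_wp_haar[of "indicator E"] E by simp
    qed
  qed (rule sets_wp_haar)
  show ?thesis
    unfolding wp_induced_def mixture_def[symmetric]
    by (rule P_haar.nn_integral_mixture[OF _ f]) (simp add: wp_mu0_def sets_measure_of_borel)
qed

lemma nn_integral_wp_mu0:
  assumes h: "h \<in> borel_measurable borel"
  shows "(\<integral>\<^sup>+ v. h v \<partial>wp_mu0 G \<gamma>p \<gamma>q) = (\<integral>\<^sup>+ x. (\<integral>\<^sup>+ v. h v \<partial>wp_eta G \<gamma>p \<gamma>q x) \<partial>induced G)"
proof -
  interpret eta: measurable_kernel "wp_eta G \<gamma>p \<gamma>q" UNIV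
  proof
    show "(\<lambda>x. emeasure (wp_eta G \<gamma>p \<gamma>q x) E * indicator UNIV x) \<in> borel_measurable borel"
      if E: "E \<in> sets borel" for E
      using measurable_nn_integral_wp_eta[of "indicator E"] E by (simp add: sets_wp_eta)
  qed (rule sets_wp_eta)
  have "wp_mu0 G \<gamma>p \<gamma>q = mixture (induced G) (wp_eta G \<gamma>p \<gamma>q) UNIV"
    unfolding wp_mu0_def by (rule measure_of_eq_mixture) simp
  then show ?thesis
    using eta.nn_integral_mixture[OF _ h] by (simp add: induced_def sets_measure_of_borel)
qed

text \<open>Here the fibre conditions of \<open>\<gamma>\<^sub>p, \<gamma>\<^sub>q\<close> place almost every \<open>(s, y, t)\<close> in \<open>P\<^sup>(\<^sup>0\<^sup>)\<close>, and Tonelli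
  exchanges \<open>\<gamma>\<^sub>q\<^sup>d\<^sup>(\<^sup>y\<^sup>)\<close> with \<open>\<lambda>\<^sub>S\<^sup>s\<close>.\<close>

lemma nn_integral_wp_eta_wp_haar:
  assumes f: "f \<in> borel_measurable borel"
  shows "(\<integral>\<^sup>+ v. (\<integral>\<^sup>+ z. f z \<partial>wp_haar S T v) * indicator units_P v \<partial>wp_eta G \<gamma>p \<gamma>q y) =
    (\<integral>\<^sup>+ s. (\<integral>\<^sup>+ \<sigma>. (\<integral>\<^sup>+ t. (\<integral>\<^sup>+ \<tau>. f (\<sigma>, y, \<tau>)
        \<partial>haar T t) \<partial>\<gamma>q (dm G y)) \<partial>haar S s) \<partial>\<gamma>p (rg G y))"
proof -
  have r: "rg G y \<in> units G" and d: "dm G y \<in> units G"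
    using rg_in_units dm_in_units[OF groupoid_G] by auto
  have AE_s: "AE s in \<gamma>p (rg G y). s \<in> units S \<and> p s = rg G y"
    using closed_vimage[OF closed_singleton continuous_p]
    by (intro AE_bsm_fibre[OF bsm_p r]) auto
  have AE_t: "AE t in \<gamma>q (dm G y). t \<in> units T \<and> q t = dm G y"
    using closed_vimage[OF closed_singleton continuous_q]
    by (intro AE_bsm_fibre[OF bsm_q d]) auto
  define A where "A \<sigma> t = (\<integral>\<^sup>+ \<tau>. f (\<sigma>, y, \<tau>) \<partial>haar T t) * indicator (units T) t" for \<sigma> t
  have "(\<lambda>z::('s \<times> 'g) \<times> 't. f (fst (fst z), snd (fst z), snd z)) \<in> borel_measurable borel"
    using f unfolding borel_prod[symmetric] by measurable
  from T_haar.measurable_nn_integral_Pair[OF this]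
  have inner: "(\<lambda>z::('s \<times> 'g) \<times> 't. (\<integral>\<^sup>+ \<tau>. f (fst (fst z), snd (fst z), \<tau>) \<partial>haar T (snd z))
      * indicator (units T) (snd z)) \<in> borel_measurable borel" by simp
  have "(\<lambda>w::'s \<times> 't. ((fst w, y), snd w)) \<in> borel \<rightarrow>\<^sub>M borel"
    unfolding borel_prod[symmetric] by measurable
  from measurable_compose[OF this inner]
  have "(\<lambda>w. A (fst w) (snd w)) \<in> borel_measurable borel"
    by (simp add: A_def)
  then have A_measurable: "(\<lambda>w. A (fst w) (snd w)) \<in> borel_measurable (borel \<Otimes>\<^sub>M borel)"
    unfolding borel_prod .
  have swap: "(\<integral>\<^sup>+ t. (\<integral>\<^sup>+ z. f z \<partial>wp_haar S T (s, y, t)) * indicator units_P (s, y, t) \<partial>\<gamma>q (dm G y)) =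
      (\<integral>\<^sup>+ \<sigma>. (\<integral>\<^sup>+ t. (\<integral>\<^sup>+ \<tau>. f (\<sigma>, y, \<tau>) \<partial>haar T t) \<partial>\<gamma>q (dm G y)) \<partial>haar S s)"
    if s: "s \<in> units S" "p s = rg G y" for s
  proof -
    interpret pair_sigma_finite "haar S s" "\<gamma>q (dm G y)"
      by (intro pair_sigma_finite.intro S_haar.sigma_finite q_bsm.sigma_finite s d)
    have "(\<integral>\<^sup>+ t. (\<integral>\<^sup>+ z. f z \<partial>wp_haar S T (s, y, t)) * indicator units_P (s, y, t) \<partial>\<gamma>q (dm G y)) =
        (\<integral>\<^sup>+ t. (\<integral>\<^sup>+ \<sigma>. A \<sigma> t \<partial>haar S s) \<partial>\<gamma>q (dm G y))"
      by (intro nn_integral_cong_AE, rule AE_mp[OF AE_t], intro AE_I2 impI)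
        (use s in \<open>auto simp: A_def nn_integral_wp_haar[OF f] wp_units_def\<close>)
    also have "\<dots> = (\<integral>\<^sup>+ \<sigma>. (\<integral>\<^sup>+ t. A \<sigma> t \<partial>\<gamma>q (dm G y)) \<partial>haar S s)"
      using A_measurable S_haar.sets_N[OF s(1)] q_bsm.sets_N[OF d]
      by (intro Fubini') (simp add: split_beta' cong: measurable_cong_sets sets_pair_measure_cong)
    also have "\<dots> = (\<integral>\<^sup>+ \<sigma>. (\<integral>\<^sup>+ t. (\<integral>\<^sup>+ \<tau>. f (\<sigma>, y, \<tau>) \<partial>haar T t) \<partial>\<gamma>q (dm G y)) \<partial>haar S s)"
      by (intro nn_integral_cong nn_integral_cong_AE, rule AE_mp[OF AE_t], intro AE_I2 impI)
        (auto simp: A_def)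
    finally show ?thesis .
  qed
  have "(\<integral>\<^sup>+ v. (\<integral>\<^sup>+ z. f z \<partial>wp_haar S T v) * indicator units_P v \<partial>wp_eta G \<gamma>p \<gamma>q y) =
      (\<integral>\<^sup>+ s. (\<integral>\<^sup>+ t. (\<integral>\<^sup>+ z. f z \<partial>wp_haar S T (s, y, t)) * indicator units_P (s, y, t)
        \<partial>\<gamma>q (dm G y)) \<partial>\<gamma>p (rg G y))"
    by (rule nn_integral_wp_eta[OF measurable_nn_integral_wp_haar[OF f]])
  also have "\<dots> = (\<integral>\<^sup>+ s. (\<integral>\<^sup>+ \<sigma>. (\<integral>\<^sup>+ t. (\<integral>\<^sup>+ \<tau>. f (\<sigma>, y, \<tau>)
        \<partial>haar T t) \<partial>\<gamma>q (dm G y)) \<partial>haar S s) \<partial>\<gamma>p (rg G y))"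
    by (rule nn_integral_cong_AE, rule AE_mp[OF AE_s], intro AE_I2 impI) (simp add: swap)
  finally show ?thesis .
qed

end

theorem lemma5p10:
  fixes S :: "('s::{second_countable_topology, t2_space}) hgpd"
    and G :: "('g::{second_countable_topology, t2_space}) hgpd"
    and T :: "('t::{second_countable_topology, t2_space}) hgpd"
    and p :: "'s \<Rightarrow> 'g" and q :: "'t \<Rightarrow> 'g"
    and \<gamma>p :: "'g \<Rightarrow> 's measure" and \<gamma>q :: "'g \<Rightarrow> 't measure"
    and f :: "'s \<times> 'g \<times> 't \<Rightarrow> ennreal"
  assumes "haar_groupoid S" and "haar_groupoid G" and "haar_groupoid T"
    and "haar_hom S G p" and "haar_hom T G q"
    and "bsm (units S) (units G) p \<gamma>p" and "loc_finite_bsm (units S) (units G) \<gamma>p"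
    and "loc_bounded_bsm (units S) (units G) \<gamma>p" and "disintegrates \<gamma>p (mu0 S) (mu0 G)"
    and "bsm (units T) (units G) q \<gamma>q" and "loc_finite_bsm (units T) (units G) \<gamma>q"
    and "loc_bounded_bsm (units T) (units G) \<gamma>q" and "disintegrates \<gamma>q (mu0 T) (mu0 G)"
    and "f \<in> borel_measurable borel"
  shows "(\<integral>\<^sup>+ z. f z \<partial>wp_induced S G T p q \<gamma>p \<gamma>q) =
    (\<integral>\<^sup>+ u. (\<integral>\<^sup>+ y. (\<integral>\<^sup>+ s. (\<integral>\<^sup>+ \<sigma>. (\<integral>\<^sup>+ t. (\<integral>\<^sup>+ \<tau>. f (\<sigma>, y, \<tau>)
        \<partial>haar T t) \<partial>\<gamma>q (dm G y)) \<partial>haar S s) \<partial>\<gamma>p (rg G y)) \<partial>haar G u) \<partial>mu0 G)"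
proof -
  interpret weak_pullback S G T p q \<gamma>p \<gamma>q
    using assms by unfold_locales
  note f = \<open>f \<in> borel_measurable borel\<close>
  let ?\<Phi> = "\<lambda>v. (\<integral>\<^sup>+ z. f z \<partial>wp_haar S T v) * indicator units_P v"
  have "(\<integral>\<^sup>+ z. f z \<partial>wp_induced S G T p q \<gamma>p \<gamma>q) = (\<integral>\<^sup>+ v. ?\<Phi> v \<partial>wp_mu0 G \<gamma>p \<gamma>q)"
    by (rule nn_integral_wp_induced[OF f])
  also have "\<dots> = (\<integral>\<^sup>+ y. (\<integral>\<^sup>+ v. ?\<Phi> v \<partial>wp_eta G \<gamma>p \<gamma>q y) \<partial>induced G)"
    by (rule nn_integral_wp_mu0[OF measurable_nn_integral_wp_haar[OF f]])
  also have "\<dots> = (\<integral>\<^sup>+ u. (\<integral>\<^sup>+ y. (\<integral>\<^sup>+ v. ?\<Phi> v \<partial>wp_eta G \<gamma>p \<gamma>q y) \<partial>haar G u) \<partial>mu0 G)"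
    by (rule nn_integral_induced[OF haar_G measurable_nn_integral_wp_eta[OF measurable_nn_integral_wp_haar[OF f]]])
  finally show ?thesis
    by (simp add: nn_integral_wp_eta_wp_haar[OF f])
qed

end
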